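(* Let $n\in\mathbb{N}\cup\{0\}$, $A_1,\dots,A_n\in\mathscr{Q}$ and $\mathcal{A}=\{A_1,\dots,A_n\}$. An option set $S\in\mathscr{Q}$ belongs to $\mathrm{Ex}(\mathcal{A})$ if and only if either $S\cap\mathscr{V}_{>0}\neq\emptyset$, or $n\neq0$ and for every $\mathbf{u}\in\times_{j=1}^nA_j$ there exist some $s\in S\cup\{0\}$ and some $\boldsymbol\lambda\in\mathbb{R}^{n,+}$ with $\boldsymbol\lambda\mathbf{u}\le s$.
   Context: Let $\mathcal{X}$ be a nonempty set and let $\mathscr{V}$ be the real vector space of all functions $u:\mathcal{X}\to\mathbb{R}$ (options), with pointwise operations. For $u,v\in\mathscr{V}$, $u\le v$ iff $u(x)\le v(x)$ for all $x\in\mathcal{X}$, and $u<v$ iff $u\le v$ and $u\neq v$. Let $\mathscr{V}_{>0}=\{u\in\mathscr{V}:0<u\}$ and $\mathscr{V}^s_{>0}=\{\{u\}:u\in\mathscr{V}_{>0}\}$. Let $\mathscr{Q}$ be the set of all finite subsets of $\mathscr{V}$ (including $\emptyset$). For a positive integer $n$, $\mathbb{R}^{n,+}=\{\boldsymbol\lambda\in\mathbb{R}^n:\lambda_j\ge0\ \forall j,\ \sum_j\lambda_j>0\}$, and for $\boldsymbol\lambda\in\mathbb{R}^n$, $\mathbf u=(u_1,\dots,u_n)\in\mathscr{V}^n$, $\boldsymbol\lambda\mathbf u=\sum_{j=1}^n\lambda_ju_j$. A set of desirable option sets is any $K\subseteq\mathscr{Q}$. It is coherent if for all $A,B\in K$: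 (K0) $A\setminus\{0\}\in K$; (K1) $\{0\}\notin K$; (K2) $\mathscr{V}^s_{>0}\subseteq K$; (K3) $\{\boldsymbol\lambda(\mathbf u)\mathbf u:\mathbf u\in A\times B\}\in K$ for every map $\boldsymbol\lambda:A\times B\to\mathbb{R}^{2,+}$; (K4) $A\cup Q\in K$ for all $Q\in\mathscr{Q}$. $\bar{\mathbf K}$ denotes the set of coherent sets of desirable option sets. An assessment is any subset $\mathcal{A}\subseteq\mathscr{Q}$. Let $\bar{\mathbf K}(\mathcal A)=\{K\in\bar{\mathbf K}:\mathcal A\subseteq K\}$ and $\mathrm{Ex}(\mathcal A)=\bigcap\bar{\mathbf K}(\mathcal A)$, with the convention $\bigcap\emptyset=\mathscr{Q}$. *)

theory Defs
  imports Complex_Main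
begin

text \<open>Options are functions 'x => real (the type 'x is the nonempty set X).\<close>

definition opt_zero :: "'x \<Rightarrow> real" where
  "opt_zero = (\<lambda>_. 0)"

definition opt_le :: "('x \<Rightarrow> real) \<Rightarrow> ('x \<Rightarrow> real) \<Rightarrow> bool" where
  "opt_le u v \<longleftrightarrow> (\<forall>x. u x \<le> v x)"

definition opt_lt :: "('x \<Rightarrow> real) \<Rightarrow> ('x \<Rightarrow> real) \<Rightarrow> bool" where
  "opt_lt u v \<longleftrightarrow> opt_le u v \<and> u \<noteq> v"

definition Vpos :: "('x \<Rightarrow> real) set" where
  "Vpos = {u. opt_lt opt_zero u}"

definition Vpos_s :: "('x \<Rightarrow> real) set set" where
  "Vpos_s = {{u} | u. u \<in> Vpos}"

definition Qs :: "('x \<Rightarrow> real) set set" where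
  "Qs = {A. finite A}"

definition R2plus :: "(real \<times> real) set" where
  "R2plus = {(a, b). 0 \<le> a \<and> 0 \<le> b \<and> a + b > 0}"

definition coherent :: "('x \<Rightarrow> real) set set \<Rightarrow> bool" where
  "coherent K \<longleftrightarrow> K \<subseteq> Qs \<and>
     (\<forall>A\<in>K. A - {opt_zero} \<in> K) \<and>
     {opt_zero} \<notin> K \<and>
     Vpos_s \<subseteq> K \<and>
     (\<forall>A\<in>K. \<forall>B\<in>K. \<forall>lam :: ('x \<Rightarrow> real) \<times> ('x \<Rightarrow> real) \<Rightarrow> real \<times> real.
        (\<forall>p\<in>A \<times> B. lam p \<in> R2plus) \<longrightarrow>
        {(\<lambda>x. fst (lam p) * fst p x + snd (lam p) * snd p x) | p. p \<in> A \<times> B} \<in> K) \<and>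
     (\<forall>A\<in>K. \<forall>Q\<in>Qs. A \<union> Q \<in> K)"

definition Kbar_of :: "('x \<Rightarrow> real) set set \<Rightarrow> ('x \<Rightarrow> real) set set set" where
  "Kbar_of \<A> = {K. coherent K \<and> \<A> \<subseteq> K}"

definition Ex :: "('x \<Rightarrow> real) set set \<Rightarrow> ('x \<Rightarrow> real) set set" where
  "Ex \<A> = (if Kbar_of \<A> = {} then Qs else \<Inter> (Kbar_of \<A>))"

end

theory Submission
  imports Defs
begin

text \<open>
  For a selection \<open>u\<close> of one option from each \<open>A\<^sub>j\<close>, the condition asks for an element
  of \<open>S \<union> {0}\<close> in the cone \<open>posi({u\<^sub>j} \<union> V\<^sub>>\<^sub>0)\<close>. Necessity: the finite sets
  satisfying the condition are closed under K0--K4 (closure under K3 because that cone is convex)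
  and contain every \<open>A\<^sub>j\<close>, so they form a coherent set of desirable option sets, unless \<open>{0}\<close>
  satisfies the condition, in which case every set does. Sufficiency: in a coherent \<open>K\<close>
  containing the \<open>A\<^sub>j\<close>, K3 lets one replace, one option at a time, the elements of
  \<open>A\<^sub>n\<^sub>-\<^sub>1\<close> by combinations with sets obtained inductively from \<open>A\<^sub>0, \<dots>, A\<^sub>n\<^sub>-\<^sub>2\<close>;
  this yields a set in \<open>K\<close> all of whose elements are dominated by elements of \<open>S \<union> {0}\<close>,
  and adding the positive differences (K2, K3), dropping \<open>0\<close> (K0) and adding \<open>S\<close> (K4)
  gives \<open>S \<in> K\<close>.
\<close>

abbreviation lin_comb :: "nat \<Rightarrow> (nat \<Rightarrow> real) \<Rightarrow> (nat \<Rightarrow> 'x \<Rightarrow> real) \<Rightarrow> 'x \<Rightarrow> real" where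
  "lin_comb n lam u \<equiv> (\<lambda>x. \<Sum>j<n. lam j * u j x)"

lemma Vpos_iff: "u \<in> Vpos \<longleftrightarrow> (\<forall>x. 0 \<le> u x) \<and> (\<exists>x. 0 < u x)"
  unfolding Vpos_def opt_lt_def opt_le_def opt_zero_def fun_eq_iff
  by (auto simp: less_le)

lemma opt_zero_notin_Vpos: "opt_zero \<notin> Vpos"
  by (simp add: Vpos_iff opt_zero_def)

lemma Vpos_lin_comb:
  assumes "0 \<le> a" "0 \<le> b" "0 < a + b" "a = 0 \<or> v \<in> Vpos" "b = 0 \<or> w \<in> Vpos"
  shows "(\<lambda>x. a * v x + b * w x) \<in> Vpos"
proof -
  have "0 \<le> a * v x" "0 \<le> b * w x" for x
    using assms by (auto simp: Vpos_iff)
  moreover have "\<exists>x. 0 < a * v x \<or> 0 < b * w x"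
    using assms by (cases "a = 0") (auto simp: Vpos_iff zero_less_mult_iff)
  ultimately show ?thesis
    unfolding Vpos_iff by (meson add_nonneg_nonneg add_nonneg_pos add_pos_nonneg)
qed

lemma Vpos_diff:
  assumes "opt_le a s" and "s \<noteq> a"
  shows "(\<lambda>x. s x - a x) \<in> Vpos"
proof -
  from \<open>s \<noteq> a\<close> obtain y where "s y \<noteq> a y"
    by (auto simp: fun_eq_iff)
  with \<open>opt_le a s\<close> have "0 < s y - a y"
    unfolding opt_le_def by (simp add: less_le)
  with \<open>opt_le a s\<close> show ?thesis
    unfolding Vpos_iff opt_le_def by auto
qed

lemma coherent_finite: "coherent K \<Longrightarrow> A \<in> K \<Longrightarrow> finite A"
  unfolding coherent_def Qs_def by auto

lemma coherent_remove_zero: "coherent K \<Longrightarrow> A \<in> K \<Longrightarrow> A - {opt_zero} \<in> K"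
  unfolding coherent_def by auto

lemma coherent_Vpos: "coherent K \<Longrightarrow> v \<in> Vpos \<Longrightarrow> {v} \<in> K"
  unfolding coherent_def Vpos_s_def by auto

lemma coherent_K3:
  "coherent K \<Longrightarrow> A \<in> K \<Longrightarrow> B \<in> K \<Longrightarrow> \<forall>p\<in>A \<times> B. lam p \<in> R2plus \<Longrightarrow>
   {(\<lambda>x. fst (lam p) * fst p x + snd (lam p) * snd p x) | p. p \<in> A \<times> B} \<in> K"
  unfolding coherent_def by (elim conjE) simp

lemma coherent_union: "coherent K \<Longrightarrow> A \<in> K \<Longrightarrow> finite Q \<Longrightarrow> A \<union> Q \<in> K"
  unfolding coherent_def Qs_def by auto

lemma mem_Ex_iff: "S \<in> Qs \<Longrightarrow> S \<in> Ex \<A> \<longleftrightarrow> (\<forall>K. coherent K \<longrightarrow> \<A> \<subseteq> K \<longrightarrow> S \<in> K)"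
  unfolding Ex_def Kbar_of_def by auto

text \<open>\<open>in_posi n u s\<close> says \<open>s \<in> posi({u\<^sub>0, \<dots>, u\<^sub>n\<^sub>-\<^sub>1} \<union> V\<^sub>>\<^sub>0)\<close>: the positive
  options of a positive combination are absorbed into the inequality \<open>\<lambda>u \<le> s\<close>.\<close>

definition in_posi :: "nat \<Rightarrow> (nat \<Rightarrow> 'x \<Rightarrow> real) \<Rightarrow> ('x \<Rightarrow> real) \<Rightarrow> bool" where
  "in_posi n u s \<longleftrightarrow> (\<exists>lam. (\<forall>j<n. 0 \<le> lam j) \<and> opt_le (lin_comb n lam u) s \<and>
                              (0 < (\<Sum>j<n. lam j) \<or> s \<in> Vpos))"

lemma in_posi_lin_comb:
  assumes s: "in_posi n u s" and t: "in_posi n u t" and ab: "0 \<le> a" "0 \<le> b" "0 < a + b"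
  shows "in_posi n u (\<lambda>x. a * s x + b * t x)"
proof -
  obtain ls where ls: "\<forall>j<n. 0 \<le> ls j" "opt_le (lin_comb n ls u) s" "0 < (\<Sum>j<n. ls j) \<or> s \<in> Vpos"
    using s by (auto simp: in_posi_def)
  obtain lt where lt: "\<forall>j<n. 0 \<le> lt j" "opt_le (lin_comb n lt u) t" "0 < (\<Sum>j<n. lt j) \<or> t \<in> Vpos"
    using t by (auto simp: in_posi_def)
  define lam where "lam j = a * ls j + b * lt j" for j
  have nonneg: "\<forall>j<n. 0 \<le> lam j"
    using ls(1) lt(1) ab by (simp add: lam_def)
  have "lin_comb n lam u x \<le> a * s x + b * t x" for x
  proof -
    have "lin_comb n lam u x = a * lin_comb n ls u x + b * lin_comb n lt u x"
      by (simp add: lam_def sum.distrib sum_distrib_left algebra_simps)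
    also have "\<dots> \<le> a * s x + b * t x"
      using ls(2) lt(2) ab by (intro add_mono mult_left_mono) (auto simp: opt_le_def)
    finally show ?thesis .
  qed
  then have le: "opt_le (lin_comb n lam u) (\<lambda>x. a * s x + b * t x)"
    by (simp add: opt_le_def)
  have sum_lam: "(\<Sum>j<n. lam j) = a * (\<Sum>j<n. ls j) + b * (\<Sum>j<n. lt j)"
    by (simp add: lam_def sum.distrib sum_distrib_left)
  have "0 < (\<Sum>j<n. lam j) \<or> (\<lambda>x. a * s x + b * t x) \<in> Vpos"
  proof (cases "0 < (\<Sum>j<n. lam j)")
    case False
    moreover have "0 \<le> a * (\<Sum>j<n. ls j)" "0 \<le> b * (\<Sum>j<n. lt j)"
      using ls(1) lt(1) ab by (auto intro!: mult_nonneg_nonneg sum_nonneg)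
    ultimately have "a * (\<Sum>j<n. ls j) = 0" "b * (\<Sum>j<n. lt j) = 0"
      unfolding sum_lam by linarith+
    then have "a = 0 \<or> s \<in> Vpos" "b = 0 \<or> t \<in> Vpos"
      using ls(3) lt(3) by auto
    with ab show ?thesis
      by (simp add: Vpos_lin_comb)
  qed simp
  with nonneg le show ?thesis
    unfolding in_posi_def by blast
qed

definition posi_covered :: "nat \<Rightarrow> (nat \<Rightarrow> ('x \<Rightarrow> real) set) \<Rightarrow> ('x \<Rightarrow> real) set \<Rightarrow> bool" where
  "posi_covered n A S \<longleftrightarrow> (\<forall>u. (\<forall>j<n. u j \<in> A j) \<longrightarrow> (\<exists>s\<in>S \<union> {opt_zero}. in_posi n u s))"

lemma posi_covered_mono: "posi_covered n A T \<Longrightarrow> T \<subseteq> S \<union> {opt_zero} \<Longrightarrow> posi_covered n A S"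
  unfolding posi_covered_def by blast

lemma posi_covered_Vpos: "v \<in> S \<Longrightarrow> v \<in> Vpos \<Longrightarrow> posi_covered n A S"
  unfolding posi_covered_def in_posi_def
  by (intro allI impI bexI[of _ v] exI[of _ "\<lambda>_. 0"]) (auto simp: opt_le_def Vpos_iff)

lemma posi_covered_component:
  assumes "i < n"
  shows "posi_covered n A (A i)"
  unfolding posi_covered_def
proof (intro allI impI)
  fix u
  assume "\<forall>j<n. u j \<in> A j"
  moreover have "lin_comb n (\<lambda>j. if j = i then 1 else 0) u = u i"
    using assms by (simp add: fun_eq_iff if_distrib[of "\<lambda>c. c * _"] cong: if_cong)
  moreover have "(\<Sum>j<n. if j = i then 1 else 0 :: real) = 1"
    using assms by simp
  ultimately show "\<exists>s\<in>A i \<union> {opt_zero}. in_posi n u s"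
    using assms unfolding in_posi_def
    by (intro bexI[of _ "u i"] exI[of _ "\<lambda>j. if j = i then 1 else 0"]) (auto simp: opt_le_def)
qed

lemma posi_covered_K3:
  assumes S: "posi_covered n A S" and T: "posi_covered n A T"
    and lam: "\<forall>p\<in>S \<times> T. lam p \<in> R2plus"
  shows "posi_covered n A {(\<lambda>x. fst (lam p) * fst p x + snd (lam p) * snd p x) | p. p \<in> S \<times> T}"
    (is "posi_covered n A ?C")
  unfolding posi_covered_def
proof (intro allI impI)
  fix u
  assume u: "\<forall>j<n. u j \<in> A j"
  obtain s t where s: "s \<in> S \<union> {opt_zero}" "in_posi n u s" and t: "t \<in> T \<union> {opt_zero}" "in_posi n u t"
    using S T u unfolding posi_covered_def by blast
  show "\<exists>c\<in>?C \<union> {opt_zero}. in_posi n u c"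
  proof (cases "s = opt_zero \<or> t = opt_zero")
    case True
    then show ?thesis using s t by auto
  next
    case False
    with s t have st: "(s, t) \<in> S \<times> T" by simp
    obtain a b where ab: "lam (s, t) = (a, b)" by fastforce
    have "(a, b) \<in> R2plus" using lam st ab by metis
    then have "0 \<le> a" "0 \<le> b" "0 < a + b" by (simp_all add: R2plus_def)
    then have "in_posi n u (\<lambda>x. a * s x + b * t x)"
      using s(2) t(2) by (rule in_posi_lin_comb[rotated 2])
    moreover have "(\<lambda>x. a * s x + b * t x) \<in> ?C"
      using st ab by (intro CollectI exI[of _ "(s, t)"]) simp
    ultimately show ?thesis by blast
  qed
qed

lemma coherent_posi_covered:
  fixes A :: "nat \<Rightarrow> ('x \<Rightarrow> real) set"
  assumes "\<not> posi_covered n A {opt_zero}"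
  shows "coherent {T \<in> Qs. posi_covered n A T}"
  unfolding coherent_def
proof (intro conjI ballI allI impI)
  fix T B assume T: "T \<in> {T \<in> Qs. posi_covered n A T}" and B: "B \<in> {T \<in> Qs. posi_covered n A T}"
  fix lam
  assume "\<forall>p\<in>T \<times> B. lam p \<in> R2plus"
  moreover have "finite {(\<lambda>x. fst (lam p) * fst p x + snd (lam p) * snd p x) | p. p \<in> T \<times> B}"
    using T B by (intro finite_image_set) (simp add: Qs_def)
  ultimately show "{(\<lambda>x. fst (lam p) * fst p x + snd (lam p) * snd p x) | p. p \<in> T \<times> B}
      \<in> {T \<in> Qs. posi_covered n A T}"
    using T B posi_covered_K3[of n A T B lam] unfolding Qs_def by blast
next
  fix T assume "T \<in> {T \<in> Qs. posi_covered n A T}"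
  then show "T - {opt_zero} \<in> {T \<in> Qs. posi_covered n A T}"
    by (auto simp: Qs_def elim: posi_covered_mono)
next
  fix T Q :: "('x \<Rightarrow> real) set"
  assume "T \<in> {T \<in> Qs. posi_covered n A T}" "Q \<in> Qs"
  then show "T \<union> Q \<in> {T \<in> Qs. posi_covered n A T}"
    by (auto simp: Qs_def elim: posi_covered_mono)
next
  show "Vpos_s \<subseteq> {T \<in> Qs. posi_covered n A T}"
    by (auto simp: Qs_def Vpos_s_def intro: posi_covered_Vpos)
qed (use assms in \<open>auto simp: Qs_def\<close>)

lemma posi_covered_iff:
  "posi_covered n A S \<longleftrightarrow> S \<inter> Vpos \<noteq> {} \<or>
     (n \<noteq> 0 \<and> (\<forall>u. (\<forall>j<n. u j \<in> A j) \<longrightarrow>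
        (\<exists>s\<in>S \<union> {opt_zero}. \<exists>lam. (\<forall>j<n. 0 \<le> lam j) \<and> (\<Sum>j<n. lam j) > 0 \<and>
           opt_le (lin_comb n lam u) s)))"
  (is "_ \<longleftrightarrow> _ \<or> ?cnd")
proof
  assume cov: "posi_covered n A S"
  show "S \<inter> Vpos \<noteq> {} \<or> ?cnd"
  proof (cases "S \<inter> Vpos = {}")
    case True
    then have notVpos: "s \<notin> Vpos" if "s \<in> S \<union> {opt_zero}" for s
      using that opt_zero_notin_Vpos by blast
    have "n \<noteq> 0"
    proof
      assume "n = 0"
      with cov notVpos show False
        unfolding posi_covered_def in_posi_def by auto
    qed
    with cov notVpos show ?thesis
      unfolding posi_covered_def in_posi_def by blast
  qed simp
next
  assume "S \<inter> Vpos \<noteq> {} \<or> ?cnd"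
  then show "posi_covered n A S"
  proof
    assume "S \<inter> Vpos \<noteq> {}"
    then show ?thesis by (auto intro: posi_covered_Vpos)
  next
    assume ?cnd
    then show ?thesis
      unfolding posi_covered_def in_posi_def by blast
  qed
qed

lemma posi_covered_if_mem_Ex:
  assumes "\<forall>j<n. A j \<in> Qs" and "S \<in> Qs" and "S \<in> Ex (A ` {..<n})"
  shows "posi_covered n A S"
proof (cases "posi_covered n A {opt_zero}")
  case True
  then show ?thesis by (rule posi_covered_mono) simp
next
  case False
  then have "coherent {T \<in> Qs. posi_covered n A T}"
    by (rule coherent_posi_covered)
  moreover have "A ` {..<n} \<subseteq> {T \<in> Qs. posi_covered n A T}"
    using assms(1) posi_covered_component by auto
  ultimately show ?thesis
    using assms(3) mem_Ex_iff[OF assms(2)] by blast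
qed

definition combines_to :: "(('x \<Rightarrow> real) \<Rightarrow> bool) \<Rightarrow> ('x \<Rightarrow> real) \<Rightarrow> ('x \<Rightarrow> real) \<Rightarrow> bool" where
  "combines_to P a c \<longleftrightarrow> (\<exists>w\<in>R2plus. P (\<lambda>x. fst w * a x + snd w * c x))"

lemma combines_toI:
  "0 \<le> \<alpha> \<Longrightarrow> 0 \<le> \<beta> \<Longrightarrow> 0 < \<alpha> + \<beta> \<Longrightarrow> P (\<lambda>x. \<alpha> * a x + \<beta> * c x) \<Longrightarrow> combines_to P a c"
  unfolding combines_to_def R2plus_def by force

definition selections_posi :: "nat \<Rightarrow> (nat \<Rightarrow> ('x \<Rightarrow> real) set) \<Rightarrow> (('x \<Rightarrow> real) \<Rightarrow> bool) \<Rightarrow> bool" where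
  "selections_posi n B P \<longleftrightarrow> (\<forall>u. (\<forall>j<n. u j \<in> B j) \<longrightarrow>
     (\<exists>lam. (\<forall>j<n. 0 \<le> lam j) \<and> 0 < (\<Sum>j<n. lam j) \<and> P (lin_comb n lam u)))"

text \<open>The weights \<open>(1, 0)\<close> on pairs \<open>(b, c)\<close> with \<open>b \<noteq> a\<close> keep \<open>b\<close>; only \<open>a\<close> is replaced.\<close>

lemma coherent_replace:
  assumes K: "coherent K" and R: "R \<in> K" and F: "F \<in> K" and comb: "\<forall>c\<in>F. combines_to P a c"
  shows "\<exists>R'\<in>K. \<forall>r\<in>R'. (r \<in> R \<and> r \<noteq> a) \<or> P r"
proof -
  obtain w where w: "\<forall>c\<in>F. w c \<in> R2plus \<and> P (\<lambda>x. fst (w c) * a x + snd (w c) * c x)"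
    using bchoice[OF comb[unfolded combines_to_def Bex_def]] by blast
  define lam where "lam p = (if fst p = a then w (snd p) else (1, 0))" for p
  let ?R' = "{(\<lambda>x. fst (lam p) * fst p x + snd (lam p) * snd p x) | p. p \<in> R \<times> F}"
  show ?thesis
  proof (rule bexI)
    have "\<forall>p\<in>R \<times> F. lam p \<in> R2plus"
      using w by (auto simp: lam_def R2plus_def)
    then show "?R' \<in> K"
      by (rule coherent_K3[OF K R F])
    show "\<forall>r\<in>?R'. (r \<in> R \<and> r \<noteq> a) \<or> P r"
    proof
      fix r assume "r \<in> ?R'"
      then obtain b c where bc: "b \<in> R" "c \<in> F"
        and r: "r = (\<lambda>x. fst (lam (b, c)) * b x + snd (lam (b, c)) * c x)"
        by auto
      show "(r \<in> R \<and> r \<noteq> a) \<or> P r"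
        using w bc r by (cases "b = a") (simp_all add: lam_def)
    qed
  qed
qed

lemma coherent_replace_all:
  assumes K: "coherent K" and R: "R \<in> K"
    and comb: "\<forall>a\<in>R. \<not> P a \<longrightarrow> (\<exists>F\<in>K. \<forall>c\<in>F. combines_to P a c)"
  shows "\<exists>R'\<in>K. \<forall>r\<in>R'. P r"
proof -
  have reduce: "\<exists>R'\<in>K. \<forall>r\<in>R'. P r"
    if "finite D" "R \<in> K" "{r \<in> R. \<not> P r} \<subseteq> D" "\<forall>a\<in>D. \<exists>F\<in>K. \<forall>c\<in>F. combines_to P a c"
    for D R
    using that
  proof (induction D arbitrary: R rule: finite_induct)
    case empty
    then show ?case by blast
  next
    case (insert a D)
    obtain F where "F \<in> K" "\<forall>c\<in>F. combines_to P a c"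
      using insert.prems(3) by blast
    then obtain R1 where R1: "R1 \<in> K" "\<forall>r\<in>R1. (r \<in> R \<and> r \<noteq> a) \<or> P r"
      using coherent_replace[OF K insert.prems(1)] by blast
    have "{r \<in> R1. \<not> P r} \<subseteq> D"
      using R1(2) insert.prems(2) by blast
    with R1(1) insert.prems(3) show ?case
      by (intro insert.IH) simp_all
  qed
  have "finite {r \<in> R. \<not> P r}"
    using coherent_finite[OF K R] by simp
  then show ?thesis
    using reduce[OF _ R subset_refl] comb by blast
qed

lemma selections_posi_Suc:
  assumes "n \<noteq> 0" and sel: "selections_posi (Suc n) B P" and a: "a \<in> B n"
  shows "selections_posi n B (combines_to P a)"
  unfolding selections_posi_def
proof (intro allI impI)
  fix u assume "\<forall>j<n. u j \<in> B j"
  with a have "\<forall>j<Suc n. (u(n := a)) j \<in> B j"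
    by (auto simp: less_Suc_eq)
  then obtain lam where lam: "\<forall>j<Suc n. 0 \<le> lam j" "0 < (\<Sum>j<Suc n. lam j)"
      "P (lin_comb (Suc n) lam (u(n := a)))"
    using sel unfolding selections_posi_def by blast
  have split: "lin_comb (Suc n) lam (u(n := a)) = (\<lambda>x. lam n * a x + 1 * lin_comb n lam u x)"
    by (simp add: fun_eq_iff)
  show "\<exists>lam. (\<forall>j<n. 0 \<le> lam j) \<and> 0 < (\<Sum>j<n. lam j) \<and> combines_to P a (lin_comb n lam u)"
  proof (cases "0 < (\<Sum>j<n. lam j)")
    case True
    have "combines_to P a (lin_comb n lam u)"
      by (rule combines_toI[of "lam n" 1]) (use lam(1) lam(3)[unfolded split] in auto)
    with lam(1) True show ?thesis
      by (intro exI[of _ lam]) simp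
  next
    case False
    \<comment> \<open>then \<open>a\<close> alone carries \<open>P\<close>, and \<open>\<beta> = 0\<close> allows any weights on \<open>u\<close>\<close>
    have nonneg: "\<forall>j<n. 0 \<le> lam j"
      using lam(1) by simp
    then have "0 \<le> (\<Sum>j<n. lam j)"
      by (auto intro: sum_nonneg)
    with False have zero: "(\<Sum>j<n. lam j) = 0"
      by linarith
    with nonneg have "\<forall>j<n. lam j = 0"
      using sum_nonneg_eq_0_iff[of "{..<n}" lam] by auto
    then have "lin_comb (Suc n) lam (u(n := a)) = (\<lambda>x. lam n * a x + 0 * lin_comb n (\<lambda>_. 1) u x)"
      by (auto simp: fun_eq_iff intro!: sum.neutral)
    with lam(3) have "P (\<lambda>x. lam n * a x + 0 * lin_comb n (\<lambda>_. 1) u x)"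
      by simp
    moreover have "0 < lam n"
      using lam(2) zero by simp
    ultimately have "combines_to P a (lin_comb n (\<lambda>_. 1) u)"
      by (intro combines_toI[of "lam n" 0]) auto
    with \<open>n \<noteq> 0\<close> show ?thesis
      by (intro exI[of _ "\<lambda>_. 1"]) simp
  qed
qed

lemma coherent_selections_posi:
  assumes K: "coherent K"
  shows "\<forall>j<n. B j \<in> K \<Longrightarrow> selections_posi n B P \<Longrightarrow> \<exists>R\<in>K. \<forall>r\<in>R. P r"
proof (induction n arbitrary: P)
  case 0
  then show ?case by (simp add: selections_posi_def)
next
  case (Suc n)
  have "\<exists>F\<in>K. \<forall>c\<in>F. combines_to P a c" if a: "a \<in> B n" for a
  proof (cases "n = 0")
    case True
    with a Suc.prems(2) obtain lam :: "nat \<Rightarrow> real" where "0 < lam 0" "P (\<lambda>x. lam 0 * a x)"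
      unfolding selections_posi_def by (auto dest!: spec[of _ "\<lambda>_. a"])
    then have "\<forall>c. combines_to P a c"
      using combines_toI[of "lam 0" 0 P a] by simp
    with Suc.prems(1) show ?thesis by blast
  next
    case False
    then have "selections_posi n B (combines_to P a)"
      using Suc.prems(2) a by (rule selections_posi_Suc)
    with Suc.prems(1) show ?thesis
      using Suc.IH by simp
  qed
  with Suc.prems(1) show ?case
    using coherent_replace_all[OF K, of "B n" P] by simp
qed

lemma coherent_dominated:
  assumes K: "coherent K" and R: "R \<in> K" and S: "S \<in> Qs"
    and dom: "\<forall>r\<in>R. \<exists>s\<in>S \<union> {opt_zero}. opt_le r s"
  shows "S \<in> K"
proof -
  have "\<exists>F\<in>K. \<forall>c\<in>F. combines_to (\<lambda>r. r \<in> S \<union> {opt_zero}) a c"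
    if "a \<in> R" "a \<notin> S \<union> {opt_zero}" for a
  proof -
    obtain s where s: "s \<in> S \<union> {opt_zero}" "opt_le a s"
      using dom \<open>a \<in> R\<close> by blast
    with \<open>a \<notin> S \<union> {opt_zero}\<close> have "{\<lambda>x. s x - a x} \<in> K"
      by (metis K Vpos_diff coherent_Vpos)
    moreover have "combines_to (\<lambda>r. r \<in> S \<union> {opt_zero}) a (\<lambda>x. s x - a x)"
      using s(1) by (intro combines_toI[of 1 1]) auto
    ultimately show ?thesis by blast
  qed
  then obtain R' where R': "R' \<in> K" "\<forall>r\<in>R'. r \<in> S \<union> {opt_zero}"
    using coherent_replace_all[OF K R, of "\<lambda>r. r \<in> S \<union> {opt_zero}"] by blast
  have "(R' - {opt_zero}) \<union> S \<in> K"
    by (rule coherent_union[OF K coherent_remove_zero[OF K R'(1)]]) (use S in \<open>simp add: Qs_def\<close>)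
  moreover have "(R' - {opt_zero}) \<union> S = S"
    using R'(2) by blast
  ultimately show ?thesis by simp
qed

lemma posi_covered_in_coherent:
  assumes K: "coherent K" and A: "\<forall>j<n. A j \<in> K" and S: "S \<in> Qs"
    and cov: "posi_covered n A S"
  shows "S \<in> K"
proof (cases "S \<inter> Vpos = {}")
  case True
  then have "selections_posi n A (\<lambda>r. \<exists>s\<in>S \<union> {opt_zero}. opt_le r s)"
    using cov opt_zero_notin_Vpos unfolding posi_covered_def in_posi_def selections_posi_def
    by blast
  then obtain R where "R \<in> K" "\<forall>r\<in>R. \<exists>s\<in>S \<union> {opt_zero}. opt_le r s"
    using coherent_selections_posi[OF K A] by blast
  then show ?thesis
    using coherent_dominated[OF K _ S] by blast
next
  case False
  then obtain v where "v \<in> S" "v \<in> Vpos" by blast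
  then have "{v} \<union> S \<in> K"
    using S unfolding Qs_def by (blast intro: coherent_union coherent_Vpos K)
  with \<open>v \<in> S\<close> show ?thesis
    by (simp add: insert_absorb)
qed

lemma mem_Ex_if_posi_covered:
  assumes "S \<in> Qs" and "posi_covered n A S"
  shows "S \<in> Ex (A ` {..<n})"
proof -
  have "S \<in> K" if "coherent K" "A ` {..<n} \<subseteq> K" for K
    by (rule posi_covered_in_coherent[OF that(1) _ assms]) (use that(2) in auto)
  then show ?thesis
    by (simp add: mem_Ex_iff[OF assms(1)])
qed

theorem theorem5:
  fixes n :: nat and A :: "nat \<Rightarrow> ('x \<Rightarrow> real) set" and S :: "('x \<Rightarrow> real) set"
  assumes "\<forall>j<n. A j \<in> Qs" and "S \<in> Qs"
  shows "S \<in> Ex (A ` {..<n}) \<longleftrightarrow>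
    (S \<inter> Vpos \<noteq> {} \<or>
     (n \<noteq> 0 \<and>
      (\<forall>u :: nat \<Rightarrow> ('x \<Rightarrow> real). (\<forall>j<n. u j \<in> A j) \<longrightarrow>
        (\<exists>s\<in>S \<union> {opt_zero}. \<exists>lam :: nat \<Rightarrow> real.
           (\<forall>j<n. 0 \<le> lam j) \<and> (\<Sum>j<n. lam j) > 0 \<and>
           opt_le (\<lambda>x. \<Sum>j<n. lam j * u j x) s))))"
proof -
  have "S \<in> Ex (A ` {..<n}) \<longleftrightarrow> posi_covered n A S"
    using assms posi_covered_if_mem_Ex mem_Ex_if_posi_covered by blast
  then show ?thesis
    unfolding posi_covered_iff .
qed

end
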